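(* Let $T\subset\mathbb{S}^{d-1}$ be a path simplex with vertices $p_1,\dots,p_d$ ordered along its path, and let $g_i$ be the inward facing normal to the facet opposite $p_i$. Then the Gram matrix $G_T^tG_T$, where $G_T=[g_1\,\cdots\,g_d]$, is tridiagonal, i.e. $g_i\cdot g_j=0$ whenever $|i-j|\ge 2$.
   Context: A spherical simplex in $\mathbb{S}^{d-1}\subset\mathbb{R}^d$ with vertices $p_1,\dots,p_d$ (linearly independent unit vectors) is $\mathbb{S}^{d-1}$ intersected with the cone $\{\sum_i\lambda_ip_i:\lambda_i\ge 0\}$; its facet $F_i$ is the face not containing $p_i$, and the inward normal $g_i$ is a vector orthogonal to the span of $\{p_j:j\ne i\}$ with $g_i\cdot p_i>0$. A path simplex is a spherical simplex whose vertices can be ordered $p_1,\dots,p_d$ so that the edges $p_1p_2,\dots,p_{d-1}p_d$ form a path whose edges are mutually at right angles in the following sense: for each $1\le i\le d-1$, the tangent vector $p_i-(p_i\cdot p_{i+1})p_{i+1}$ of the arc $p_ip_{i+1}$ at $p_{i+1}$ is orthogonal to each of $p_{i+1},\dots,p_d$. The endpoints $p_1,p_d$ of the path are its end vertices. *)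

theory Defs
  imports "HOL-Analysis.Analysis"
begin

definition spherical_simplex_vertices :: "(nat \<Rightarrow> 'a::euclidean_space) \<Rightarrow> bool" where
  "spherical_simplex_vertices p \<longleftrightarrow>
     (\<forall>i\<in>{1..DIM('a)}. norm (p i) = 1) \<and>
     inj_on p {1..DIM('a)} \<and>
     independent (p ` {1..DIM('a)})"

definition inward_normal :: "(nat \<Rightarrow> 'a::euclidean_space) \<Rightarrow> nat \<Rightarrow> 'a \<Rightarrow> bool" where
  "inward_normal p i g \<longleftrightarrow>
     (\<forall>v\<in>span (p ` ({1..DIM('a)} - {i})). g \<bullet> v = 0) \<and> g \<bullet> p i > 0"

text \<open>The ordering p 1, ..., p d is a path whose edges are mutually at right angles.\<close>

definition path_ordered :: "(nat \<Rightarrow> 'a::euclidean_space) \<Rightarrow> bool" where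
  "path_ordered p \<longleftrightarrow>
     (\<forall>i. 1 \<le> i \<and> i \<le> DIM('a) - 1 \<longrightarrow>
        (\<forall>k. i + 1 \<le> k \<and> k \<le> DIM('a) \<longrightarrow>
           (p i - (p i \<bullet> p (i + 1)) *\<^sub>R p (i + 1)) \<bullet> p k = 0))"

end

theory Submission
  imports Defs
begin

text \<open>The tangent vectors t k = p k - (p k \<bullet> p (k + 1)) p (k + 1) of the path (k < d),
  completed by the end vertex p d, form an orthogonal basis: t k is orthogonal to p (k + 1), ..., p d
  by the right-angle condition, while t l lies in the span of p l and p (l + 1). The normal g i is
  orthogonal to every vertex except p i, hence to every basis vector except t (i - 1) and t i, so it
  lies in their span. For |i - j| \<ge> 2 the two pairs are disjoint, so g i and g j lie in orthogonal
  planes.\<close>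

lemma orthogonal_spans:
  fixes x y :: "'a::real_inner"
  assumes "x \<in> span S" and "y \<in> span T" and "\<And>u v. u \<in> S \<Longrightarrow> v \<in> T \<Longrightarrow> u \<bullet> v = 0"
  shows "x \<bullet> y = 0"
proof -
  have "orthogonal u y" if "u \<in> S" for u
    by (rule orthogonal_to_span[OF assms(2)]) (simp add: orthogonal_def assms(3) that)
  then have "orthogonal y x"
    by (intro orthogonal_to_span[OF assms(1)]) (simp add: orthogonal_commute)
  then show ?thesis
    by (simp add: orthogonal_def inner_commute)
qed

lemma in_span_if_orthogonal_to_rest_of_orthogonal_basis:
  fixes e :: "'i \<Rightarrow> 'a::real_inner"
  assumes span: "span (e ` K) = UNIV"
    and orth: "\<And>k l. k \<in> K \<Longrightarrow> l \<in> K \<Longrightarrow> k \<noteq> l \<Longrightarrow> e k \<bullet> e l = 0"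
    and x: "\<And>k. k \<in> K - A \<Longrightarrow> x \<bullet> e k = 0"
  shows "x \<in> span (e ` (K \<inter> A))"
proof -
  have "x \<in> span (e ` (K \<inter> A) \<union> e ` (K - A))"
    using span by (simp add: Un_Diff_Int image_Un[symmetric] Un_commute)
  then obtain a b where xab: "x = a + b"
    and a: "a \<in> span (e ` (K \<inter> A))" and b: "b \<in> span (e ` (K - A))"
    by (auto simp: span_Un)
  have "a \<bullet> b = 0"
    using orthogonal_spans[OF a b] orth by blast
  moreover have "x \<bullet> b = 0"
    using orthogonal_spans[OF span_base b, of x] x by (auto simp: inner_commute)
  ultimately have "b \<bullet> b = 0"
    by (simp add: xab inner_add_left)
  then show ?thesis
    using a xab by simp
qed

lemma spherical_simplex_vertices_span:
  fixes p :: "nat \<Rightarrow> 'a::euclidean_space"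
  assumes "spherical_simplex_vertices p"
  shows "span (p ` {1..DIM('a)}) = UNIV"
proof -
  have "independent (p ` {1..DIM('a)})" and "card (p ` {1..DIM('a)}) = DIM('a)"
    using assms by (auto simp: spherical_simplex_vertices_def card_image)
  then show ?thesis
    using card_eq_dim[of "p ` {1..DIM('a)}" UNIV] by auto
qed

definition path_frame :: "(nat \<Rightarrow> 'a::euclidean_space) \<Rightarrow> nat \<Rightarrow> 'a" where
  "path_frame p k =
     (if k < DIM('a) then p k - (p k \<bullet> p (k + 1)) *\<^sub>R p (k + 1) else p k)"

lemma path_frame_in_span:
  fixes p :: "nat \<Rightarrow> 'a::euclidean_space"
  assumes "k \<in> {1..DIM('a)}"
  shows "path_frame p k \<in> span (p ` ({1..DIM('a)} \<inter> {k, k + 1}))"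
proof -
  let ?S = "span (p ` ({1..DIM('a)} \<inter> {k, k + 1}))"
  have "p k \<in> ?S" and "k < DIM('a) \<Longrightarrow> p (k + 1) \<in> ?S"
    using assms by (auto intro: span_base)
  then show ?thesis
    by (simp add: path_frame_def span_diff span_scale)
qed

lemma path_frame_orthogonal_vertex:
  fixes p :: "nat \<Rightarrow> 'a::euclidean_space"
  assumes "path_ordered p" and "1 \<le> k" and "k < m" and "m \<le> DIM('a)"
  shows "path_frame p k \<bullet> p m = 0"
  using assms by (simp add: path_ordered_def path_frame_def)

lemma path_frame_orthogonal:
  fixes p :: "nat \<Rightarrow> 'a::euclidean_space"
  assumes "path_ordered p" and "k \<in> {1..DIM('a)}" and "l \<in> {1..DIM('a)}" and "k \<noteq> l"
  shows "path_frame p k \<bullet> path_frame p l = 0"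
proof -
  have "path_frame p k \<bullet> path_frame p l = 0"
    if "k \<in> {1..DIM('a)}" "l \<in> {1..DIM('a)}" "k < l" for k l
  proof (rule orthogonal_spans)
    show "path_frame p k \<in> span {path_frame p k}"
      by (simp add: span_base)
    show "path_frame p l \<in> span (p ` ({1..DIM('a)} \<inter> {l, l + 1}))"
      using path_frame_in_span \<open>l \<in> _\<close> .
    show "u \<bullet> v = 0" if "u \<in> {path_frame p k}" "v \<in> p ` ({1..DIM('a)} \<inter> {l, l + 1})" for u v
      using that path_frame_orthogonal_vertex[OF \<open>path_ordered p\<close>] \<open>k \<in> _\<close> \<open>k < l\<close> by auto
  qed
  then show ?thesis
    using assms by (metis inner_commute linorder_neq_iff)
qed

lemma vertex_in_span_path_frame:
  fixes p :: "nat \<Rightarrow> 'a::euclidean_space"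
  assumes "k \<in> {1..DIM('a)}"
  shows "p k \<in> span (path_frame p ` {k..DIM('a)})"
  using assms
proof (induction "DIM('a) - k" arbitrary: k)
  case 0
  then have "path_frame p k = p k"
    by (simp add: path_frame_def)
  then show ?case
    using 0 by (metis atLeastAtMost_iff image_eqI order_refl span_base)
next
  case (Suc n)
  then have "p (k + 1) \<in> span (path_frame p ` {k + 1..DIM('a)})"
    by simp
  moreover have "span (path_frame p ` {k + 1..DIM('a)}) \<subseteq> span (path_frame p ` {k..DIM('a)})"
    by (intro span_mono image_mono) auto
  ultimately have "p (k + 1) \<in> span (path_frame p ` {k..DIM('a)})"
    by blast
  moreover have "path_frame p k \<in> span (path_frame p ` {k..DIM('a)})"
    using Suc.prems by (auto intro: span_base)
  moreover have "k < DIM('a)"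
    using Suc.hyps by arith
  then have "p k = path_frame p k + (p k \<bullet> p (k + 1)) *\<^sub>R p (k + 1)"
    by (simp add: path_frame_def)
  ultimately show ?case
    by (metis span_add span_scale)
qed

lemma path_frame_span:
  fixes p :: "nat \<Rightarrow> 'a::euclidean_space"
  assumes "span (p ` {1..DIM('a)}) = UNIV"
  shows "span (path_frame p ` {1..DIM('a)}) = UNIV"
proof -
  have "p ` {1..DIM('a)} \<subseteq> span (path_frame p ` {1..DIM('a)})"
  proof (rule image_subsetI)
    fix k assume "k \<in> {1..DIM('a)}"
    moreover have "span (path_frame p ` {k..DIM('a)}) \<subseteq> span (path_frame p ` {1..DIM('a)})"
      using \<open>k \<in> _\<close> by (intro span_mono image_mono) auto
    ultimately show "p k \<in> span (path_frame p ` {1..DIM('a)})"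
      using vertex_in_span_path_frame by blast
  qed
  then have "span (p ` {1..DIM('a)}) \<subseteq> span (path_frame p ` {1..DIM('a)})"
    by (rule span_minimal[OF _ subspace_span])
  then show ?thesis
    using assms by auto
qed

lemma normal_in_span_path_frame:
  fixes p :: "nat \<Rightarrow> 'a::euclidean_space"
  assumes "span (p ` {1..DIM('a)}) = UNIV" and "path_ordered p" and "i \<in> {1..DIM('a)}"
    and normal: "\<And>m. m \<in> {1..DIM('a)} \<Longrightarrow> m \<noteq> i \<Longrightarrow> g \<bullet> p m = 0"
  shows "g \<in> span (path_frame p ` ({1..DIM('a)} \<inter> {i - 1, i}))"
proof (rule in_span_if_orthogonal_to_rest_of_orthogonal_basis)
  show "span (path_frame p ` {1..DIM('a)}) = UNIV"
    using path_frame_span[OF assms(1)] .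
  show "path_frame p k \<bullet> path_frame p l = 0"
    if "k \<in> {1..DIM('a)}" "l \<in> {1..DIM('a)}" "k \<noteq> l" for k l
    using path_frame_orthogonal[OF assms(2) that] .
  show "g \<bullet> path_frame p k = 0" if "k \<in> {1..DIM('a)} - {i - 1, i}" for k
  proof (rule orthogonal_spans)
    show "g \<in> span {g}"
      by (simp add: span_base)
    show "path_frame p k \<in> span (p ` ({1..DIM('a)} \<inter> {k, k + 1}))"
      using that by (intro path_frame_in_span) auto
    show "u \<bullet> v = 0" if "u \<in> {g}" "v \<in> p ` ({1..DIM('a)} \<inter> {k, k + 1})" for u v
      using normal \<open>k \<in> _\<close> \<open>i \<in> _\<close> that by auto
  qed
qed

theorem claim4p3:
  fixes p g :: "nat \<Rightarrow> 'a::euclidean_space"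
  assumes "spherical_simplex_vertices p"
    and "path_ordered p"
    and "\<forall>i\<in>{1..DIM('a)}. inward_normal p i (g i)"
    and "i \<in> {1..DIM('a)}" and "j \<in> {1..DIM('a)}"
    and "i + 2 \<le> j \<or> j + 2 \<le> i"
  shows "g i \<bullet> g j = 0"
proof -
  have normal_span: "g m \<in> span (path_frame p ` ({1..DIM('a)} \<inter> {m - 1, m}))"
    if "m \<in> {1..DIM('a)}" for m
  proof (rule normal_in_span_path_frame[OF spherical_simplex_vertices_span[OF assms(1)] assms(2) that])
    show "g m \<bullet> p l = 0" if "l \<in> {1..DIM('a)}" "l \<noteq> m" for l
    proof -
      have "p l \<in> span (p ` ({1..DIM('a)} - {m}))"
        using that by (intro span_base) auto
      then show ?thesis
        using assms(3) \<open>m \<in> _\<close> by (auto simp: inward_normal_def)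
    qed
  qed
  have "{i - 1, i} \<inter> {j - 1, j} = {}"
    using assms(4-6) by auto
  then show ?thesis
    using orthogonal_spans[OF normal_span[OF assms(4)] normal_span[OF assms(5)]]
      path_frame_orthogonal[OF assms(2)] by blast
qed

end
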